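(* Let $d:\mathcal{A}\to A$ be any derivation with Fourier components $d_n$. Then for every $a\in\mathcal{A}$ and every finitely supported $x\in c_{00}(\mathbb{Z}_{\ge0})\subseteq\ell^2(\mathbb{Z}_{\ge0})$, the series $\sum_{n\in\mathbb{Z}}d_n(a)x$ converges in $\ell^2(\mathbb{Z}_{\ge0})$ and $\sum_{n\in\mathbb{Z}}d_n(a)x=d(a)x$.
   Context: Setup: $G$ is an infinite compact (Hausdorff) abelian group, written additively, and $x_1\in G$ generates a dense cyclic subgroup; $x_n=nx_1$. $\widehat G$ is the group of continuous characters. Let $H_+=\ell^2(\mathbb{Z}_{\ge 0})$ with canonical basis $\{E_k^+\}$; $UE_k^+=E_{k+1}^+$, $M^+_fE^+_k=f(x_k)E^+_k$, $\mathbb{K}E_k^+=kE_k^+$. $A=C^*(U,M^+_f:f\in C(G))$, $\mathcal{A}$ is the $*$-subalgebra generated by $U,U^*,M^+_\chi$ ($\chi\in\widehat G$). For $\theta\in\mathbb{R}$, $\rho_\theta(a)=e^{i\theta\mathbb{K}}ae^{-i\theta\mathbb{K}}$. The $n$-th Fourier component of a derivation $d:\mathcal A\to A$ is $d_n(a)=\frac{1}{2\pi}\int_0^{2\pi}e^{in\theta}\rho_\theta^{-1}\big(d(\rho_\theta(a))\big)\,d\theta$. *)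

theory Defs
  imports "HOL-Analysis.Analysis"
begin

type_synonym vec = "nat \<Rightarrow> complex"
type_synonym op = "vec \<Rightarrow> vec"

definition gmul :: "nat \<Rightarrow> 'g::ab_group_add \<Rightarrow> 'g" where
  "gmul n x = (((+) x) ^^ n) 0"

definition zmul :: "int \<Rightarrow> 'g::ab_group_add \<Rightarrow> 'g" where
  "zmul k x = (if k \<ge> 0 then gmul (nat k) x else - gmul (nat (-k)) x)"

definition characters :: "('g::{topological_ab_group_add,t2_space} \<Rightarrow> complex) set" where
  "characters = {chi. continuous_on UNIV chi \<and> (\<forall>a b. chi (a + b) = chi a * chi b)
                     \<and> (\<forall>a. cmod (chi a) = 1)}"

definition l2 :: "vec \<Rightarrow> bool" where
  "l2 v \<longleftrightarrow> summable (\<lambda>k. (cmod (v k))\<^sup>2)"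

definition l2norm :: "vec \<Rightarrow> real" where
  "l2norm v = sqrt (\<Sum>k. (cmod (v k))\<^sup>2)"

definition fin_supp :: "vec \<Rightarrow> bool" where
  "fin_supp v \<longleftrightarrow> finite {k. v k \<noteq> 0}"

definition shiftU :: op where
  "shiftU v = (\<lambda>k. if k = 0 then 0 else v (k - 1))"

definition shiftUadj :: op where
  "shiftUadj v = (\<lambda>k. v (Suc k))"

definition multM :: "'g::ab_group_add \<Rightarrow> ('g \<Rightarrow> complex) \<Rightarrow> op" where
  "multM x1 f v = (\<lambda>k. f (gmul k x1) * v k)"

text \<open>\<open>expK \<theta> = e^{i \<theta> K}\<close>, \<open>K E_k = k E_k\<close>.\<close>
definition expK :: "real \<Rightarrow> op" where
  "expK \<theta> v = (\<lambda>k. exp (\<i> * of_real (\<theta> * real k)) * v k)"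

definition rho :: "real \<Rightarrow> op \<Rightarrow> op" where
  "rho \<theta> a = expK \<theta> \<circ> a \<circ> expK (-\<theta>)"

inductive_set alg_gen :: "op set \<Rightarrow> op set" for S :: "op set" where
  gen: "a \<in> S \<Longrightarrow> a \<in> alg_gen S"
| add: "a \<in> alg_gen S \<Longrightarrow> b \<in> alg_gen S \<Longrightarrow> (\<lambda>v k. a v k + b v k) \<in> alg_gen S"
| smult: "a \<in> alg_gen S \<Longrightarrow> (\<lambda>v k. c * a v k) \<in> alg_gen S"
| mult: "a \<in> alg_gen S \<Longrightarrow> b \<in> alg_gen S \<Longrightarrow> a \<circ> b \<in> alg_gen S"

definition Acal :: "'g::{topological_ab_group_add,t2_space} \<Rightarrow> op set" where
  "Acal x1 = alg_gen ({shiftU, shiftUadj} \<union> multM x1 ` characters)"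

definition bounded_op :: "op \<Rightarrow> bool" where
  "bounded_op T \<longleftrightarrow> (\<forall>v. l2 v \<longrightarrow> l2 (T v)) \<and>
     (\<exists>C. \<forall>v. l2 v \<longrightarrow> l2norm (T v) \<le> C * l2norm v)"

text \<open>A = C^*(U, M_f : f in C(G)): the operator-norm closure of the *-algebra generated by
  U, U^*, M_f (this algebra is already *-closed since M_f^* = M_{conj f}).
  Operators are compared on l2 only.\<close>
definition Aalg :: "'g::{topological_ab_group_add,t2_space} \<Rightarrow> op set" where
  "Aalg x1 = {T. bounded_op T \<and>
     (\<forall>\<epsilon>>0. \<exists>S\<in>alg_gen ({shiftU, shiftUadj} \<union> multM x1 ` {f. continuous_on UNIV f}).
        \<forall>v. l2 v \<longrightarrow> l2norm (\<lambda>k. T v k - S v k) \<le> \<epsilon> * l2norm v)}"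

definition is_derivation :: "'g::{topological_ab_group_add,t2_space} \<Rightarrow> (op \<Rightarrow> op) \<Rightarrow> bool" where
  "is_derivation x1 d \<longleftrightarrow>
     (\<forall>a\<in>Acal x1. d a \<in> Aalg x1) \<and>
     (\<forall>a\<in>Acal x1. \<forall>b\<in>Acal x1. \<forall>v. l2 v \<longrightarrow>
         d (\<lambda>w k. a w k + b w k) v = (\<lambda>k. d a v k + d b v k)) \<and>
     (\<forall>a\<in>Acal x1. \<forall>c. \<forall>v. l2 v \<longrightarrow>
         d (\<lambda>w k. c * a w k) v = (\<lambda>k. c * d a v k)) \<and>
     (\<forall>a\<in>Acal x1. \<forall>b\<in>Acal x1. \<forall>v. l2 v \<longrightarrow>
         d (a \<circ> b) v = (\<lambda>k. a (d b v) k + d a (b v) k))"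

text \<open>n-th Fourier component
  \<open>d_n(a) = 1/(2\<pi>) \<integral>_0^{2\<pi>} e^{in\<theta>} \<rho>_\<theta>^{-1}(d(\<rho>_\<theta>(a))) d\<theta>\<close>,
  applied to a vector x, computed coordinatewise (\<open>\<rho>_\<theta>^{-1} = \<rho>_{-\<theta>}\<close>).\<close>
definition fourier_comp :: "(op \<Rightarrow> op) \<Rightarrow> int \<Rightarrow> op \<Rightarrow> op" where
  "fourier_comp d n a x = (\<lambda>k. complex_of_real (1 / (2 * pi)) *
      integral {0..2*pi} (\<lambda>\<theta>. exp (\<i> * of_real (real_of_int n * \<theta>)) * rho (-\<theta>) (d (rho \<theta> a)) x k))"

end

theory Submission
  imports Defs
begin

text \<open>Every \<open>a \<in> \<A>\<close> is a finite sum of homogeneous operators \<open>b\<^sub>i\<close>,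
  \<open>\<rho>\<^sub>\<theta>(b\<^sub>i) = exp(i m\<^sub>i \<theta>) b\<^sub>i\<close>, since \<open>U\<close>, \<open>U\<^sup>*\<close> and \<open>M\<^sub>\<chi>\<close> have degrees 1, -1 and 0.
  The operators \<open>d(b\<^sub>i)\<close> lie in \<open>A\<close> and are therefore linear, so for finitely supported \<open>x\<close>
  the integrand defining \<open>d\<^sub>n(a)x\<close> is, coordinatewise, a trigonometric polynomial in \<open>\<theta>\<close>:
  \<open>d\<^sub>n(a)x\<close> collects the coordinates \<open>k\<close> of the finitely many vectors \<open>x\<^sub>j d(b\<^sub>i)E\<^sub>j\<close> with
  \<open>k - m\<^sub>i - j = n\<close>, whereas \<open>d(a)x\<close> is the sum of all these vectors. The symmetric partial
  sums of \<open>\<Sum>\<^sub>n d\<^sub>n(a)x\<close> therefore agree with \<open>d(a)x\<close> in every coordinate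
  \<open>k \<le> N - max |m\<^sub>i + j|\<close>, and the difference is dominated by an \<open>\<ell>\<^sup>2\<close>-tail.\<close>

definition linop :: "op \<Rightarrow> bool" where
  "linop b \<longleftrightarrow> (\<forall>v w. b (\<lambda>k. v k + w k) = (\<lambda>k. b v k + b w k)) \<and>
     (\<forall>c v. b (\<lambda>k. c * v k) = (\<lambda>k. c * b v k))"

lemma linop_add: "linop b \<Longrightarrow> b (\<lambda>k. v k + w k) = (\<lambda>k. b v k + b w k)"
  by (simp add: linop_def)

lemma linop_smult: "linop b \<Longrightarrow> b (\<lambda>k. c * v k) = (\<lambda>k. c * b v k)"
  by (simp add: linop_def)

lemma linop_zero: "linop b \<Longrightarrow> b (\<lambda>k. 0) = (\<lambda>k. 0)"
  using linop_smult[of b 0 "\<lambda>k. 0"] by simp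

lemma linop_sum_list: "linop b \<Longrightarrow> b (\<lambda>k. \<Sum>q\<leftarrow>L. f q k) = (\<lambda>k. \<Sum>q\<leftarrow>L. b (f q) k)"
proof (induction L)
  case Nil
  then show ?case using linop_zero by simp
next
  case (Cons q L)
  then show ?case using linop_add[OF Cons.prems, of "f q" "\<lambda>k. \<Sum>q\<leftarrow>L. f q k"] by simp
qed

lemma alg_gen_linop:
  assumes "\<And>s. s \<in> S \<Longrightarrow> linop s" and "a \<in> alg_gen S"
  shows "linop a"
  using assms(2)
proof induction
  case (gen a)
  then show ?case using assms(1) by blast
qed (simp_all add: linop_def algebra_simps)

lemma linop_shiftU: "linop shiftU"
  by (simp add: linop_def shiftU_def fun_eq_iff)

lemma linop_shiftUadj: "linop shiftUadj"
  by (simp add: linop_def shiftUadj_def)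

lemma linop_multM: "linop (multM x1 f)"
  by (simp add: linop_def multM_def algebra_simps)

abbreviation generators :: "'g::ab_group_add \<Rightarrow> ('g \<Rightarrow> complex) set \<Rightarrow> op set" where
  "generators x1 F \<equiv> {shiftU, shiftUadj} \<union> multM x1 ` F"

lemma linop_generator:
  assumes "s \<in> generators x1 F"
  shows "linop s"
  using assms linop_shiftU linop_shiftUadj linop_multM by blast

lemma exp_i_add: "exp (\<i> * of_real s) * exp (\<i> * of_real t) = exp (\<i> * of_real (s + t))"
  by (simp add: exp_add[symmetric] algebra_simps)

lemma expK_uminus_expK: "expK (-\<theta>) (expK \<theta> v) = v"
  by (simp add: expK_def exp_add[symmetric] fun_eq_iff)

lemma rho_comp: "rho \<theta> (b \<circ> c) = rho \<theta> b \<circ> rho \<theta> c"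
  by (simp add: rho_def comp_def expK_uminus_expK)

definition homogeneous :: "int \<Rightarrow> op \<Rightarrow> bool" where
  "homogeneous m b \<longleftrightarrow> (\<forall>\<theta>. rho \<theta> b = (\<lambda>v k. exp (\<i> * of_real (of_int m * \<theta>)) * b v k))"

lemma homogeneousD:
  "homogeneous m b \<Longrightarrow> rho \<theta> b v = (\<lambda>k. exp (\<i> * of_real (of_int m * \<theta>)) * b v k)"
  unfolding homogeneous_def by metis

lemma homogeneous_shiftU: "homogeneous 1 shiftU"
proof -
  have "exp (\<i> * of_real (\<theta> * real k)) * exp (\<i> * of_real (-\<theta> * real (k - 1))) = exp (\<i> * of_real \<theta>)"
    if "k \<noteq> 0" for \<theta> k
  proof -
    have "\<theta> * real k + -\<theta> * real (k - 1) = \<theta>"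
      using that by (simp add: of_nat_diff algebra_simps)
    then show ?thesis by (simp only: exp_i_add)
  qed
  then show ?thesis
    by (auto simp: homogeneous_def rho_def expK_def shiftU_def fun_eq_iff)
qed

lemma homogeneous_shiftUadj: "homogeneous (-1) shiftUadj"
proof -
  have "exp (\<i> * of_real (\<theta> * real k)) * exp (\<i> * of_real (-\<theta> * real (Suc k))) = exp (\<i> * of_real (-\<theta>))"
    for \<theta> k
  proof -
    have "\<theta> * real k + -\<theta> * real (Suc k) = -\<theta>"
      by (simp add: algebra_simps)
    then show ?thesis by (simp only: exp_i_add)
  qed
  then show ?thesis
    by (auto simp: homogeneous_def rho_def expK_def shiftUadj_def fun_eq_iff)
qed

lemma homogeneous_multM: "homogeneous 0 (multM x1 f)"
proof -
  have "exp (\<i> * of_real (\<theta> * real k)) * (f (gmul k x1) * (exp (\<i> * of_real (-\<theta> * real k)) * v k))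
      = f (gmul k x1) * v k" for \<theta> k v
    using exp_i_add[of "\<theta> * real k" "-\<theta> * real k"] by (simp add: mult_ac)
  then show ?thesis
    by (auto simp: homogeneous_def rho_def expK_def multM_def fun_eq_iff)
qed

lemma homogeneous_comp:
  assumes "homogeneous m b" "homogeneous l c" "linop b"
  shows "homogeneous (m + l) (b \<circ> c)"
proof -
  have "rho \<theta> (b \<circ> c) v k = exp (\<i> * of_real (of_int (m + l) * \<theta>)) * b (c v) k" for \<theta> v k
  proof -
    have "rho \<theta> (b \<circ> c) v k = rho \<theta> b (rho \<theta> c v) k"
      by (simp add: rho_comp)
    also have "\<dots> = exp (\<i> * of_real (of_int m * \<theta>)) * (exp (\<i> * of_real (of_int l * \<theta>)) * b (c v) k)"
      using assms by (simp add: homogeneousD linop_smult)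
    also have "\<dots> = exp (\<i> * of_real (of_int (m + l) * \<theta>)) * b (c v) k"
      by (simp only: mult.assoc[symmetric] exp_i_add) (simp add: algebra_simps)
    finally show ?thesis .
  qed
  then show ?thesis
    by (simp add: homogeneous_def fun_eq_iff)
qed

lemma homogeneous_smult: "homogeneous m b \<Longrightarrow> homogeneous m (\<lambda>v k. c * b v k)"
proof -
  assume b: "homogeneous m b"
  have "rho \<theta> (\<lambda>v k. c * b v k) v = (\<lambda>k. c * rho \<theta> b v k)" for \<theta> v
    by (simp add: rho_def expK_def fun_eq_iff mult.left_commute)
  then show ?thesis
    using b by (simp add: homogeneous_def homogeneousD fun_eq_iff mult.left_commute)
qed

lemma sum_list_concat_map:
  "(\<Sum>r\<leftarrow>[g p q. p\<leftarrow>xs, q\<leftarrow>ys]. f r) = (\<Sum>p\<leftarrow>xs. \<Sum>q\<leftarrow>ys. f (g p q))"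
  by (induction xs) (auto simp: comp_def)

lemma alg_gen_homogeneous_decomp:
  assumes lin: "\<And>s. s \<in> S \<Longrightarrow> linop s" and deg: "\<And>s. s \<in> S \<Longrightarrow> \<exists>m. homogeneous m s"
    and "a \<in> alg_gen S"
  shows "\<exists>L. (\<forall>p\<in>set L. snd p \<in> alg_gen S \<and> homogeneous (fst p) (snd p))
           \<and> a = (\<lambda>v k. \<Sum>p\<leftarrow>L. snd p v k)"
  using assms(3)
proof induction
  case (gen s)
  then obtain m where "homogeneous m s" using deg by blast
  then show ?case using gen by (intro exI[of _ "[(m, s)]"]) (auto intro: alg_gen.gen)
next
  case (add a b)
  then obtain La Lb where
    "\<forall>p\<in>set La. snd p \<in> alg_gen S \<and> homogeneous (fst p) (snd p)" "a = (\<lambda>v k. \<Sum>p\<leftarrow>La. snd p v k)"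
    "\<forall>p\<in>set Lb. snd p \<in> alg_gen S \<and> homogeneous (fst p) (snd p)" "b = (\<lambda>v k. \<Sum>p\<leftarrow>Lb. snd p v k)"
    by blast
  then show ?case by (intro exI[of _ "La @ Lb"]) auto
next
  case (smult a c)
  then obtain La where La: "\<forall>p\<in>set La. snd p \<in> alg_gen S \<and> homogeneous (fst p) (snd p)"
    "a = (\<lambda>v k. \<Sum>p\<leftarrow>La. snd p v k)"
    by blast
  let ?L = "map (\<lambda>p. (fst p, \<lambda>v k. c * snd p v k)) La"
  have "(\<lambda>v k. c * a v k) = (\<lambda>v k. \<Sum>p\<leftarrow>?L. snd p v k)"
    using La(2) by (simp add: fun_eq_iff sum_list_const_mult[symmetric] comp_def)
  moreover have "\<forall>p\<in>set ?L. snd p \<in> alg_gen S \<and> homogeneous (fst p) (snd p)"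
    using La(1) by (auto intro: alg_gen.smult homogeneous_smult)
  ultimately show ?case by blast
next
  case (mult a b)
  then obtain La Lb where
    La: "\<forall>p\<in>set La. snd p \<in> alg_gen S \<and> homogeneous (fst p) (snd p)" "a = (\<lambda>v k. \<Sum>p\<leftarrow>La. snd p v k)"
    and Lb: "\<forall>p\<in>set Lb. snd p \<in> alg_gen S \<and> homogeneous (fst p) (snd p)" "b = (\<lambda>v k. \<Sum>p\<leftarrow>Lb. snd p v k)"
    by blast
  let ?L = "[(fst p + fst q, snd p \<circ> snd q). p\<leftarrow>La, q\<leftarrow>Lb]"
  have lin_La: "linop (snd p)" if "p \<in> set La" for p
    using that La(1) alg_gen_linop[OF lin] by blast
  have "(a \<circ> b) v k = (\<Sum>r\<leftarrow>?L. snd r v k)" for v k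
  proof -
    have "(a \<circ> b) v k = (\<Sum>p\<leftarrow>La. snd p (\<lambda>k. \<Sum>q\<leftarrow>Lb. snd q v k) k)"
      using La(2) Lb(2) by simp
    also have "\<dots> = (\<Sum>p\<leftarrow>La. \<Sum>q\<leftarrow>Lb. snd p (snd q v) k)"
    proof (rule arg_cong[where f=sum_list], rule map_cong[OF refl])
      fix p assume "p \<in> set La"
      then show "snd p (\<lambda>k. \<Sum>q\<leftarrow>Lb. snd q v k) k = (\<Sum>q\<leftarrow>Lb. snd p (snd q v) k)"
        using linop_sum_list[OF lin_La, of p "\<lambda>q. snd q v" Lb] by simp
    qed
    finally show ?thesis by (simp add: sum_list_concat_map)
  qed
  moreover have "\<forall>r\<in>set ?L. snd r \<in> alg_gen S \<and> homogeneous (fst r) (snd r)"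
  proof
    fix r assume "r \<in> set ?L"
    then obtain p q where pq: "p \<in> set La" "q \<in> set Lb" "r = (fst p + fst q, snd p \<circ> snd q)"
      by auto
    then show "snd r \<in> alg_gen S \<and> homogeneous (fst r) (snd r)"
      using La(1) Lb(1) lin_La[OF pq(1)] by (auto intro: alg_gen.mult homogeneous_comp)
  qed
  ultimately show ?case by (intro exI[of _ ?L]) (auto simp: fun_eq_iff)
qed

lemma homogeneous_generator:
  assumes "s \<in> generators x1 F"
  shows "\<exists>m. homogeneous m s"
proof -
  from assms consider "s = shiftU" | "s = shiftUadj" | f where "s = multM x1 f"
    by blast
  then show ?thesis
  proof cases
    case 1
    show ?thesis unfolding 1 by (intro exI[where x=1] homogeneous_shiftU)
  next
    case 2
    show ?thesis unfolding 2 by (intro exI[where x="-1"] homogeneous_shiftUadj)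
  next
    case 3
    show ?thesis unfolding 3 by (intro exI[where x=0] homogeneous_multM)
  qed
qed

lemma Acal_homogeneous_decomp:
  assumes "a \<in> Acal x1"
  obtains n :: nat and b m where "\<And>i. i < n \<Longrightarrow> b i \<in> Acal x1 \<and> homogeneous (m i) (b i)"
    and "a = (\<lambda>v k. \<Sum>i<n. b i v k)"
proof -
  have "\<exists>L. (\<forall>p\<in>set L. snd p \<in> alg_gen (generators x1 characters) \<and> homogeneous (fst p) (snd p))
      \<and> a = (\<lambda>v k. \<Sum>p\<leftarrow>L. snd p v k)"
  proof (rule alg_gen_homogeneous_decomp)
    show "a \<in> alg_gen (generators x1 characters)"
      using assms unfolding Acal_def .
  qed (fact linop_generator homogeneous_generator)+
  then obtain L where L: "\<forall>p\<in>set L. snd p \<in> Acal x1 \<and> homogeneous (fst p) (snd p)"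
    and a: "a = (\<lambda>v k. \<Sum>p\<leftarrow>L. snd p v k)"
    unfolding Acal_def by blast
  show thesis
  proof (rule that[where n="length L" and m="\<lambda>i. fst (L ! i)" and b="\<lambda>i. snd (L ! i)"])
    show "snd (L ! i) \<in> Acal x1 \<and> homogeneous (fst (L ! i)) (snd (L ! i))" if "i < length L" for i
      using L nth_mem[OF that] by blast
    show "a = (\<lambda>v k. \<Sum>i<length L. snd (L ! i) v k)"
      unfolding a by (simp add: sum_list_sum_nth atLeast0LessThan)
  qed
qed

lemma rho_homogeneous_sum:
  assumes "\<And>i. i \<in> I \<Longrightarrow> homogeneous (m i) (b i)"
  shows "rho \<theta> (\<lambda>v k. \<Sum>i\<in>I. b i v k) = (\<lambda>v k. \<Sum>i\<in>I. exp (\<i> * of_real (of_int (m i) * \<theta>)) * b i v k)"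
proof (intro ext)
  fix v k
  have "rho \<theta> (\<lambda>v k. \<Sum>i\<in>I. b i v k) v k = (\<Sum>i\<in>I. rho \<theta> (b i) v k)"
    by (simp add: rho_def expK_def sum_distrib_left)
  also have "\<dots> = (\<Sum>i\<in>I. exp (\<i> * of_real (of_int (m i) * \<theta>)) * b i v k)"
    by (intro sum.cong refl) (simp add: homogeneousD[OF assms])
  finally show "rho \<theta> (\<lambda>v k. \<Sum>i\<in>I. b i v k) v k = (\<Sum>i\<in>I. exp (\<i> * of_real (of_int (m i) * \<theta>)) * b i v k)" .
qed

lemma Acal_lincomb:
  assumes "finite I" "\<And>i. i \<in> I \<Longrightarrow> b i \<in> Acal x1"
  shows "(\<lambda>v k. \<Sum>i\<in>I. c i * b i v k) \<in> Acal x1"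
  using assms
proof (induction I rule: finite_induct)
  case empty
  have "(\<lambda>v k. 0 * shiftU v k) \<in> Acal x1"
    unfolding Acal_def by (intro alg_gen.smult alg_gen.gen) simp
  then show ?case by simp
next
  case (insert i I)
  then show ?case
    unfolding Acal_def by (simp add: alg_gen.add alg_gen.smult)
qed

lemma derivation_add:
  "is_derivation x1 d \<Longrightarrow> a \<in> Acal x1 \<Longrightarrow> b \<in> Acal x1 \<Longrightarrow> l2 v \<Longrightarrow>
    d (\<lambda>w k. a w k + b w k) v = (\<lambda>k. d a v k + d b v k)"
  unfolding is_derivation_def by blast

lemma derivation_smult:
  "is_derivation x1 d \<Longrightarrow> a \<in> Acal x1 \<Longrightarrow> l2 v \<Longrightarrow> d (\<lambda>w k. c * a w k) v = (\<lambda>k. c * d a v k)"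
  unfolding is_derivation_def by blast

lemma derivation_lincomb:
  assumes der: "is_derivation x1 d" and "finite I" "\<And>i. i \<in> I \<Longrightarrow> b i \<in> Acal x1" "l2 w"
  shows "d (\<lambda>v k. \<Sum>i\<in>I. c i * b i v k) w = (\<lambda>k. \<Sum>i\<in>I. c i * d (b i) w k)"
  using assms(2,3)
proof (induction I rule: finite_induct)
  case empty
  have "shiftU \<in> Acal x1"
    unfolding Acal_def by (rule alg_gen.gen) simp
  then have "d (\<lambda>v k. 0 * shiftU v k) w = (\<lambda>k. 0 * d shiftU w k)"
    using derivation_smult[OF der _ \<open>l2 w\<close>] by blast
  then show ?case by simp
next
  case (insert i I)
  have bi: "b i \<in> Acal x1" and rest: "(\<lambda>v k. \<Sum>j\<in>I. c j * b j v k) \<in> Acal x1"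
    using insert by (auto intro: Acal_lincomb)
  then have ci: "(\<lambda>v k. c i * b i v k) \<in> Acal x1"
    unfolding Acal_def by (blast intro: alg_gen.smult)
  have "d (\<lambda>v k. \<Sum>j\<in>insert i I. c j * b j v k) w
      = d (\<lambda>v k. c i * b i v k + (\<Sum>j\<in>I. c j * b j v k)) w"
    using insert.hyps by simp
  also have "\<dots> = (\<lambda>k. d (\<lambda>v k. c i * b i v k) w k + d (\<lambda>v k. \<Sum>j\<in>I. c j * b j v k) w k)"
    using der ci rest \<open>l2 w\<close> by (rule derivation_add)
  also have "\<dots> = (\<lambda>k. \<Sum>j\<in>insert i I. c j * d (b j) w k)"
    using insert derivation_smult[OF der bi \<open>l2 w\<close>] by simp
  finally show ?case .
qed

lemma l2norm_nonneg: "l2 v \<Longrightarrow> 0 \<le> l2norm v"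
  unfolding l2norm_def l2_def by (intro real_sqrt_ge_zero suminf_nonneg) auto

lemma l2_coord_le_l2norm:
  assumes "l2 v"
  shows "cmod (v k) \<le> l2norm v"
proof -
  have "(\<Sum>j\<in>{k}. (cmod (v j))\<^sup>2) \<le> (\<Sum>j. (cmod (v j))\<^sup>2)"
    using assms unfolding l2_def by (intro sum_le_suminf) auto
  then show ?thesis
    unfolding l2norm_def by (intro real_le_rsqrt) simp
qed

lemma l2_finite_support: "finite S \<Longrightarrow> (\<And>k. k \<notin> S \<Longrightarrow> v k = 0) \<Longrightarrow> l2 v"
  unfolding l2_def by (rule summable_finite[of S]) auto

lemma l2_add:
  assumes "l2 v" "l2 w"
  shows "l2 (\<lambda>k. v k + w k)"
proof -
  have bound: "(cmod (v k + w k))\<^sup>2 \<le> 2 * (cmod (v k))\<^sup>2 + 2 * (cmod (w k))\<^sup>2" for k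
  proof -
    have "(cmod (v k + w k))\<^sup>2 \<le> (cmod (v k) + cmod (w k))\<^sup>2"
      by (intro power_mono norm_triangle_ineq norm_ge_zero)
    also have "\<dots> \<le> 2 * (cmod (v k))\<^sup>2 + 2 * (cmod (w k))\<^sup>2"
      using zero_le_power2[of "cmod (v k) - cmod (w k)"] unfolding power2_sum power2_diff by linarith
    finally show ?thesis .
  qed
  have "summable (\<lambda>k. 2 * (cmod (v k))\<^sup>2 + 2 * (cmod (w k))\<^sup>2)"
    using assms unfolding l2_def by (intro summable_add summable_mult)
  then show ?thesis
    unfolding l2_def by (rule summable_comparison_test'[of _ 0]) (simp add: bound)
qed

lemma l2_smult: "l2 v \<Longrightarrow> l2 (\<lambda>k. c * v k)"
  using summable_mult[of "\<lambda>k. (cmod (v k))\<^sup>2" "(cmod c)\<^sup>2"]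
  unfolding l2_def by (simp add: norm_mult power_mult_distrib)

lemma l2_diff: "l2 v \<Longrightarrow> l2 w \<Longrightarrow> l2 (\<lambda>k. v k - w k)"
  using l2_add[of v "\<lambda>k. -1 * w k"] l2_smult[of w "-1"] by simp

lemma l2_shiftU: "l2 v \<Longrightarrow> l2 (shiftU v)"
  unfolding l2_def shiftU_def by (subst summable_Suc_iff[symmetric]) simp

lemma l2_shiftUadj: "l2 v \<Longrightarrow> l2 (shiftUadj v)"
  unfolding l2_def shiftUadj_def by (subst (asm) summable_Suc_iff[symmetric]) simp

lemma l2_multM:
  assumes "\<And>y. cmod (f y) \<le> B" "l2 v"
  shows "l2 (multM x1 f v)"
proof -
  have bound: "(cmod (f (gmul k x1) * v k))\<^sup>2 \<le> B\<^sup>2 * (cmod (v k))\<^sup>2" for k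
  proof -
    have "cmod (f (gmul k x1) * v k) \<le> B * cmod (v k)"
      using assms(1) by (simp add: norm_mult mult_right_mono)
    then show ?thesis
      by (metis norm_ge_zero power_mono power_mult_distrib)
  qed
  have "summable (\<lambda>k. B\<^sup>2 * (cmod (v k))\<^sup>2)"
    using assms(2) unfolding l2_def by (rule summable_mult)
  then show ?thesis
    unfolding l2_def multM_def by (rule summable_comparison_test'[of _ 0]) (simp add: bound)
qed

lemma alg_gen_l2:
  assumes "\<And>s v. s \<in> S \<Longrightarrow> l2 v \<Longrightarrow> l2 (s v)" "a \<in> alg_gen S" "l2 v"
  shows "l2 (a v)"
  using assms(2,3)
proof (induction arbitrary: v)
  case (gen a)
  then show ?case using assms(1) by blast
qed (simp_all add: l2_add l2_smult)

text \<open>This is where compactness of \<open>G\<close> enters: it makes \<open>M\<^sub>f\<close> bounded for continuous \<open>f\<close>.\<close>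
lemma alg_gen_continuous_l2:
  assumes G: "compact (UNIV :: 'g::topological_ab_group_add set)"
    and a: "a \<in> alg_gen (generators (x1::'g) {f. continuous_on UNIV f})"
    and v: "l2 v"
  shows "l2 (a v)"
proof (rule alg_gen_l2[OF _ a v])
  fix s w
  assume s: "s \<in> generators x1 {f. continuous_on UNIV f}" and w: "l2 w"
  show "l2 (s w)"
  proof (cases "s = shiftU \<or> s = shiftUadj")
    case True
    then show ?thesis using w l2_shiftU l2_shiftUadj by auto
  next
    case False
    then obtain f where f: "continuous_on UNIV f" "s = multM x1 f" using s by auto
    then have "bounded (range f)"
      using G compact_continuous_image compact_imp_bounded by blast
    then obtain B where "\<And>y. cmod (f y) \<le> B"
      unfolding bounded_iff by auto
    then show ?thesis using l2_multM w f by blast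
  qed
qed

text \<open>Elements of \<open>A\<close> are arbitrary maps, equal on \<open>\<ell>\<^sup>2\<close> to norm limits of the generated
  algebra; they inherit linearity from the approximants one coordinate at a time.\<close>
lemma linear_if_approx_by_linop:
  assumes approx: "\<And>e. e > 0 \<Longrightarrow> \<exists>S. linop S \<and> (\<forall>u. l2 u \<longrightarrow> cmod (T u k - S u k) \<le> e * l2norm u)"
    and v: "l2 v" and w: "l2 w"
  shows "T (\<lambda>k. v k + c * w k) k = T v k + c * T w k"
proof -
  define vw where "vw = (\<lambda>k. v k + c * w k)"
  have vw: "l2 vw" unfolding vw_def using v w by (simp add: l2_add l2_smult)
  define R where "R = l2norm vw + l2norm v + cmod c * l2norm w"
  have R: "R \<ge> 0" unfolding R_def using vw v w by (simp add: l2norm_nonneg)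
  have "cmod (T vw k - T v k - c * T w k) \<le> 0 + e" if "e > 0" for e
  proof -
    define e' where "e' = e / (R + 1)"
    obtain S where S: "linop S" and TS: "\<And>u. l2 u \<Longrightarrow> cmod (T u k - S u k) \<le> e' * l2norm u"
      using approx[of e'] \<open>e > 0\<close> R unfolding e'_def by auto
    have "S vw k = S v k + c * S w k"
      unfolding vw_def using linop_add[OF S, of v "\<lambda>k. c * w k"] linop_smult[OF S, of c w] by simp
    then have "cmod (T vw k - T v k - c * T w k)
        = cmod ((T vw k - S vw k) - (T v k - S v k) - c * (T w k - S w k))"
      by (intro arg_cong[where f=cmod]) (simp add: algebra_simps)
    also have "\<dots> \<le> cmod (T vw k - S vw k) + cmod (T v k - S v k) + cmod (c * (T w k - S w k))"
      by (intro order_trans[OF norm_triangle_ineq4] add_right_mono norm_triangle_ineq4)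
    also have "\<dots> \<le> e' * l2norm vw + e' * l2norm v + cmod c * (e' * l2norm w)"
      unfolding norm_mult using TS vw v w by (intro add_mono mult_left_mono) auto
    also have "\<dots> = e' * R"
      by (simp add: R_def algebra_simps)
    also have "\<dots> \<le> e"
      using R \<open>e > 0\<close> by (simp add: e'_def field_simps)
    finally show ?thesis by simp
  qed
  then have "cmod (T vw k - T v k - c * T w k) \<le> 0"
    by (rule field_le_epsilon)
  then show ?thesis unfolding vw_def by (simp add: algebra_simps)
qed

lemma Aalg_linear:
  assumes G: "compact (UNIV :: 'g::{topological_ab_group_add,t2_space} set)"
    and T: "T \<in> Aalg (x1::'g)" and "l2 v" "l2 w"
  shows "T (\<lambda>k. v k + c * w k) = (\<lambda>k. T v k + c * T w k)"
proof (intro ext linear_if_approx_by_linop[OF _ \<open>l2 v\<close> \<open>l2 w\<close>])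
  fix k and e :: real
  assume "e > 0"
  then obtain S where S: "S \<in> alg_gen (generators x1 {f. continuous_on UNIV f})"
    and TS: "\<And>u. l2 u \<Longrightarrow> l2norm (\<lambda>k. T u k - S u k) \<le> e * l2norm u"
    using T unfolding Aalg_def by blast
  have "l2 (\<lambda>k. T u k - S u k)" if "l2 u" for u
    using T that alg_gen_continuous_l2[OF G S] l2_diff unfolding Aalg_def bounded_op_def by blast
  then have "cmod (T u k - S u k) \<le> e * l2norm u" if "l2 u" for u
    using l2_coord_le_l2norm[of "\<lambda>k. T u k - S u k" k] TS[OF that] that by simp
  moreover have "linop S"
    using S linop_generator alg_gen_linop by blast
  ultimately show "\<exists>S. linop S \<and> (\<forall>u. l2 u \<longrightarrow> cmod (T u k - S u k) \<le> e * l2norm u)"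
    by blast
qed

definition unit_vec :: "nat \<Rightarrow> vec" where
  "unit_vec j = (\<lambda>k. if k = j then 1 else 0)"

lemma l2_unit_vec: "l2 (unit_vec j)"
  by (rule l2_finite_support[of "{j}"]) (auto simp: unit_vec_def)

lemma finite_support_expansion:
  assumes "finite S" "\<And>k. k \<notin> S \<Longrightarrow> v k = 0"
  shows "v = (\<lambda>k. \<Sum>j\<in>S. v j * unit_vec j k)"
  using assms by (simp add: unit_vec_def fun_eq_iff if_distrib sum.delta cong: if_cong)

lemma apply_unit_vec_expansion:
  assumes lin: "\<And>v w c. l2 v \<Longrightarrow> l2 w \<Longrightarrow> T (\<lambda>k. v k + c * w k) = (\<lambda>k. T v k + c * T w k)"
    and "finite S"
  shows "T (\<lambda>k. \<Sum>j\<in>S. c j * unit_vec j k) = (\<lambda>k. \<Sum>j\<in>S. c j * T (unit_vec j) k)"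
  using \<open>finite S\<close>
proof (induction S rule: finite_induct)
  case empty
  have "l2 (\<lambda>k. 0)" by (rule l2_finite_support[of "{}"]) auto
  then have "T (\<lambda>k. 0 + 1 * 0) = (\<lambda>k. T (\<lambda>k. 0) k + 1 * T (\<lambda>k. 0) k)"
    using lin by blast
  then show ?case by (simp add: fun_eq_iff)
next
  case (insert i S)
  have "l2 (\<lambda>k. \<Sum>j\<in>S. c j * unit_vec j k)"
    by (rule l2_finite_support[OF insert(1)]) (auto simp: unit_vec_def intro!: sum.neutral)
  then have "T (\<lambda>k. (\<Sum>j\<in>S. c j * unit_vec j k) + c i * unit_vec i k)
      = (\<lambda>k. T (\<lambda>k. \<Sum>j\<in>S. c j * unit_vec j k) k + c i * T (unit_vec i) k)"
    by (rule lin[OF _ l2_unit_vec])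
  then show ?case using insert by (simp add: add.commute)
qed

lemma Aalg_apply_finite_support:
  assumes "compact (UNIV :: 'g::{topological_ab_group_add,t2_space} set)"
    and "T \<in> Aalg (x1::'g)" and "finite S" "\<And>k. k \<notin> S \<Longrightarrow> v k = 0"
  shows "T v = (\<lambda>k. \<Sum>j\<in>S. v j * T (unit_vec j) k)"
proof -
  have "T v = T (\<lambda>k. \<Sum>j\<in>S. v j * unit_vec j k)"
    using finite_support_expansion[OF assms(3,4)] by (rule arg_cong)
  also have "\<dots> = (\<lambda>k. \<Sum>j\<in>S. v j * T (unit_vec j) k)"
    using Aalg_linear[OF assms(1,2)] assms(3) by (rule apply_unit_vec_expansion)
  finally show ?thesis .
qed

text \<open>If \<open>z p\<close> has degree \<open>deg p\<close>, its \<open>k\<close>-th coordinate oscillates with frequency \<open>k - deg p\<close>;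
  \<open>graded_part P z deg n\<close> is the frequency-\<open>n\<close> part of \<open>\<Sum>\<^sub>p z p\<close>.\<close>
definition graded_part :: "'p set \<Rightarrow> ('p \<Rightarrow> vec) \<Rightarrow> ('p \<Rightarrow> int) \<Rightarrow> int \<Rightarrow> vec" where
  "graded_part P z deg n = (\<lambda>k. \<Sum>p\<in>P. if int k - deg p = n then z p k else 0)"

lemma norm_sum_if_power2_le:
  assumes "finite P"
  shows "(cmod (\<Sum>p\<in>P. if c p then z p else 0))\<^sup>2 \<le> real (card P) * (\<Sum>p\<in>P. (cmod (z p))\<^sup>2)"
proof -
  have "(cmod (\<Sum>p\<in>P. if c p then z p else 0))\<^sup>2 \<le> (\<Sum>p\<in>P. cmod (if c p then z p else 0))\<^sup>2"
    by (intro power_mono norm_sum norm_ge_zero)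
  also have "\<dots> \<le> (\<Sum>p\<in>P. (cmod (if c p then z p else 0))\<^sup>2) * real (card P)"
    by (rule sum_squared_le_sum_of_squares)
  also have "\<dots> \<le> (\<Sum>p\<in>P. (cmod (z p))\<^sup>2) * real (card P)"
    by (intro mult_right_mono sum_mono) auto
  finally show ?thesis by (simp add: mult.commute)
qed

lemma l2norm_le_tail:
  assumes g: "summable g" and u: "\<And>k. (cmod (u k))\<^sup>2 \<le> g k" and "\<And>k. k < s \<Longrightarrow> u k = 0"
  shows "l2norm u \<le> sqrt (\<Sum>k. g (k + s))"
proof -
  have su: "summable (\<lambda>k. (cmod (u k))\<^sup>2)"
    using g by (rule summable_comparison_test'[of _ 0]) (simp add: u)
  have "(\<Sum>k. (cmod (u k))\<^sup>2) = (\<Sum>k. (cmod (u (k + s)))\<^sup>2) + (\<Sum>k<s. (cmod (u k))\<^sup>2)"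
    by (rule suminf_split_initial_segment[OF su])
  also have "(\<Sum>k<s. (cmod (u k))\<^sup>2) = 0"
    using assms(3) by simp
  also have "(\<Sum>k. (cmod (u (k + s)))\<^sup>2) \<le> (\<Sum>k. g (k + s))"
    using u summable_ignore_initial_segment[OF su] summable_ignore_initial_segment[OF g]
    by (intro suminf_le) auto
  finally show ?thesis
    unfolding l2norm_def by simp
qed

context
  fixes P :: "'p set" and z :: "'p \<Rightarrow> vec" and deg :: "'p \<Rightarrow> int"
  assumes P: "finite P" and z: "\<And>p. p \<in> P \<Longrightarrow> l2 (z p)"
begin

private definition dominant :: "nat \<Rightarrow> real" where
  "dominant k = real (card P) * (\<Sum>p\<in>P. (cmod (z p k))\<^sup>2)"

private lemma summable_dominant: "summable dominant"
  unfolding dominant_def using z unfolding l2_def by (intro summable_mult summable_sum) auto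

private lemma dominant_le: "(cmod (\<Sum>p\<in>P. if c p then z p k else 0))\<^sup>2 \<le> dominant k"
  unfolding dominant_def by (rule norm_sum_if_power2_le[OF P])

lemma l2_graded_part: "l2 (graded_part P z deg n)"
  unfolding l2_def graded_part_def
  by (rule summable_comparison_test'[OF summable_dominant, of 0]) (simp add: dominant_le)

lemma graded_parts_sum_tendsto:
  "(\<lambda>N::nat. l2norm (\<lambda>k. (\<Sum>n\<in>{-int N..int N}. graded_part P z deg n k) - (\<Sum>p\<in>P. z p k))) \<longlonglongrightarrow> 0"
proof -
  define r where "r N k = (\<Sum>n\<in>{-int N..int N}. graded_part P z deg n k) - (\<Sum>p\<in>P. z p k)" for N k
  have r_eq: "r N k = - (\<Sum>p\<in>P. if int k - deg p \<notin> {-int N..int N} then z p k else 0)" for N k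
  proof -
    have "(\<Sum>n\<in>{-int N..int N}. graded_part P z deg n k)
        = (\<Sum>p\<in>P. \<Sum>n\<in>{-int N..int N}. if int k - deg p = n then z p k else 0)"
      unfolding graded_part_def by (rule sum.swap)
    also have "\<dots> = (\<Sum>p\<in>P. if int k - deg p \<in> {-int N..int N} then z p k else 0)"
      by (intro sum.cong refl) (simp add: sum.delta)
    finally have partial: "(\<Sum>n\<in>{-int N..int N}. graded_part P z deg n k)
        = (\<Sum>p\<in>P. if int k - deg p \<in> {-int N..int N} then z p k else 0)" .
    have "(\<Sum>p\<in>P. z p k) = (\<Sum>p\<in>P. if int k - deg p \<in> {-int N..int N} then z p k else 0)
        + (\<Sum>p\<in>P. if int k - deg p \<notin> {-int N..int N} then z p k else 0)"
      unfolding sum.distrib[symmetric] by (intro sum.cong refl) simp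
    then show ?thesis
      unfolding r_def partial by simp
  qed
  obtain M :: nat where M: "\<And>p. p \<in> P \<Longrightarrow> \<bar>deg p\<bar> \<le> int M"
  proof -
    obtain M where "\<forall>y\<in>(\<lambda>p. nat \<bar>deg p\<bar>) ` P. y \<le> M"
      using finite_nat_set_iff_bounded_le P by blast
    then show ?thesis using that[of M] by fastforce
  qed
  define tail where "tail s = (\<Sum>k. dominant (k + s))" for s
  have r_le: "(cmod (r N k))\<^sup>2 \<le> dominant k" for N k
    unfolding r_eq norm_minus_cancel by (rule dominant_le)
  have bound: "l2norm (r N) \<le> sqrt (tail (N + 1 - M))" for N
    unfolding tail_def
  proof (rule l2norm_le_tail[OF summable_dominant r_le])
    show "r N k = 0" if "k < N + 1 - M" for k
    proof -
      have "int k - deg p \<in> {-int N..int N}" if "p \<in> P" for p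
        using M[OF that] \<open>k < N + 1 - M\<close> by auto
      then show ?thesis
        unfolding r_eq by (auto intro!: sum.neutral)
    qed
  qed
  have "tail \<longlonglongrightarrow> 0"
    unfolding tail_def by (rule suminf_exist_split2[OF summable_dominant])
  then have "(\<lambda>N. tail (N + 1)) \<longlonglongrightarrow> 0"
    by (rule LIMSEQ_ignore_initial_segment)
  then have "(\<lambda>N. tail (N + M + 1 - M)) \<longlonglongrightarrow> 0"
    by simp
  then have "(\<lambda>N. tail (N + 1 - M)) \<longlonglongrightarrow> 0"
    by (rule LIMSEQ_offset)
  then have sqrt_tail: "(\<lambda>N. sqrt (tail (N + 1 - M))) \<longlonglongrightarrow> 0"
    using tendsto_real_sqrt by force
  have l2_r: "l2 (r N)" for N
    unfolding l2_def by (rule summable_comparison_test'[OF summable_dominant, of 0]) (simp add: r_le)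
  have "(\<lambda>N. l2norm (r N)) \<longlonglongrightarrow> 0"
    by (rule tendsto_sandwich[where f="\<lambda>_. 0" and h="\<lambda>N. sqrt (tail (N + 1 - M))"])
      (use l2_r bound sqrt_tail in \<open>simp_all add: l2norm_nonneg\<close>)
  then show ?thesis
    unfolding r_def .
qed

end

lemma has_integral_exp_int:
  "((\<lambda>\<theta>. exp (\<i> * of_real (of_int p * \<theta>))) has_integral (if p = 0 then 2 * pi else 0)) {0..2*pi}"
proof (cases "p = 0")
  case True
  then show ?thesis
    using has_integral_const_real[of "1::complex" 0 "2*pi"] by (simp add: scaleR_conv_of_real)
next
  case False
  define A where "A = \<i> * of_int p"
  have A: "A \<noteq> 0" using False by (simp add: A_def)
  have exp_A: "exp (\<i> * of_real (of_int p * \<theta>)) = exp (\<theta> *\<^sub>R A)" for \<theta>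
    by (simp add: A_def scaleR_conv_of_real mult_ac)
  have "((\<lambda>t. exp (t *\<^sub>R A) * inverse A) has_vector_derivative exp (\<theta> *\<^sub>R A)) (at \<theta> within {0..2*pi})" for \<theta>
    using has_vector_derivative_mult_left[OF exp_scaleR_has_vector_derivative_right[of A \<theta> "{0..2*pi}"], of "inverse A"] A
    by (simp add: mult.assoc)
  then have "((\<lambda>\<theta>. exp (\<theta> *\<^sub>R A)) has_integral (exp ((2*pi) *\<^sub>R A) * inverse A - exp (0 *\<^sub>R A) * inverse A)) {0..2*pi}"
    by (intro fundamental_theorem_of_calculus) auto
  moreover have "exp ((2*pi) *\<^sub>R A) = 1"
    using exp_A[of "2*pi"] cis_multiple_2pi[of "of_int p"] by (simp add: cis_conv_exp mult_ac)
  ultimately show ?thesis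
    unfolding exp_A using False by simp
qed

lemma has_integral_trig_poly:
  fixes c :: "'p \<Rightarrow> complex"
  assumes "finite P"
  shows "((\<lambda>\<theta>. \<Sum>p\<in>P. c p * exp (\<i> * of_real (of_int (f p) * \<theta>)))
           has_integral (2 * pi) * (\<Sum>p\<in>P. if f p = 0 then c p else 0)) {0..2*pi}"
proof -
  have "((\<lambda>\<theta>. \<Sum>p\<in>P. c p * exp (\<i> * of_real (of_int (f p) * \<theta>)))
      has_integral (\<Sum>p\<in>P. c p * (if f p = 0 then 2 * pi else 0))) {0..2*pi}"
    using assms by (intro has_integral_sum has_integral_mult_right has_integral_exp_int)
  then show ?thesis
    by (simp add: sum_distrib_left if_distrib mult.commute cong: if_cong)
qed

lemma derivation_Aalg: "is_derivation x1 d \<Longrightarrow> b \<in> Acal x1 \<Longrightarrow> d b \<in> Aalg x1"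
  unfolding is_derivation_def by blast

lemma l2_derivation_unit_vec:
  assumes "is_derivation x1 d" "b \<in> Acal x1"
  shows "l2 (d b (unit_vec j))"
proof -
  have "bounded_op (d b)"
    using derivation_Aalg[OF assms] unfolding Aalg_def by blast
  then show ?thesis
    using l2_unit_vec unfolding bounded_op_def by blast
qed

lemma derivation_apply_finite_support:
  fixes x1 :: "'g::{topological_ab_group_add,t2_space}"
  assumes G: "compact (UNIV :: 'g set)" and der: "is_derivation x1 d"
    and I: "finite I" and b: "\<And>i. i \<in> I \<Longrightarrow> b i \<in> Acal x1"
    and S: "finite S" "\<And>k. k \<notin> S \<Longrightarrow> v k = 0"
  shows "d (\<lambda>w k. \<Sum>i\<in>I. c i * b i w k) v
       = (\<lambda>k. \<Sum>i\<in>I. c i * (\<Sum>j\<in>S. v j * d (b i) (unit_vec j) k))"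
proof -
  have "l2 v" using S by (rule l2_finite_support)
  have "d (\<lambda>w k. \<Sum>i\<in>I. c i * b i w k) v = (\<lambda>k. \<Sum>i\<in>I. c i * d (b i) v k)"
    by (rule derivation_lincomb[OF der I]) (fact b, fact \<open>l2 v\<close>)
  also have "\<dots> = (\<lambda>k. \<Sum>i\<in>I. c i * (\<Sum>j\<in>S. v j * d (b i) (unit_vec j) k))"
  proof (intro ext sum.cong refl arg_cong[where f="(*) _"])
    fix i k assume "i \<in> I"
    from Aalg_apply_finite_support[OF G derivation_Aalg[OF der b[OF this]] S]
    show "d (b i) v k = (\<Sum>j\<in>S. v j * d (b i) (unit_vec j) k)"
      by simp
  qed
  finally show ?thesis .
qed

lemma fourier_comp_homogeneous_sum:
  fixes x1 :: "'g::{topological_ab_group_add,t2_space}"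
  assumes G: "compact (UNIV :: 'g set)" and der: "is_derivation x1 d"
    and I: "finite I" and b: "\<And>i. i \<in> I \<Longrightarrow> b i \<in> Acal x1 \<and> homogeneous (m i) (b i)"
    and S: "finite S" "\<And>k. k \<notin> S \<Longrightarrow> x k = 0"
  shows "fourier_comp d n (\<lambda>v k. \<Sum>i\<in>I. b i v k) x
       = graded_part (I \<times> S) (\<lambda>(i, j) k. x j * d (b i) (unit_vec j) k) (\<lambda>(i, j). m i + int j) n"
proof
  fix k
  let ?a = "\<lambda>v k. \<Sum>i\<in>I. b i v k"
  let ?e = "\<lambda>t. exp (\<i> * complex_of_real t)"
  define z where "z = (\<lambda>(i, j). x j * d (b i) (unit_vec j) k)"
  define freq where "freq = (\<lambda>(i, j). n + m i + int j - int k)"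
  have integrand: "?e (of_int n * \<theta>) * rho (-\<theta>) (d (rho \<theta> ?a)) x k
      = (\<Sum>p\<in>I \<times> S. z p * ?e (of_int (freq p) * \<theta>))" for \<theta>
  proof -
    have rho_a: "rho \<theta> ?a = (\<lambda>v k. \<Sum>i\<in>I. ?e (of_int (m i) * \<theta>) * b i v k)"
      using b by (intro rho_homogeneous_sum) blast
    have "d (rho \<theta> ?a) (expK \<theta> x) k
        = (\<Sum>i\<in>I. ?e (of_int (m i) * \<theta>) * (\<Sum>j\<in>S. expK \<theta> x j * d (b i) (unit_vec j) k))"
      unfolding rho_a using G der I b S(1)
      by (subst derivation_apply_finite_support) (auto simp: expK_def S(2))
    also have "\<dots> = (\<Sum>i\<in>I. \<Sum>j\<in>S. ?e (of_int (m i) * \<theta>) * ?e (\<theta> * real j) * (x j * d (b i) (unit_vec j) k))"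
      by (simp add: expK_def sum_distrib_left mult_ac)
    finally have "?e (of_int n * \<theta>) * rho (-\<theta>) (d (rho \<theta> ?a)) x k
        = (\<Sum>i\<in>I. \<Sum>j\<in>S. ?e (of_int n * \<theta>) * ?e (- \<theta> * real k)
            * (?e (of_int (m i) * \<theta>) * ?e (\<theta> * real j)) * (x j * d (b i) (unit_vec j) k))"
      by (simp add: rho_def expK_def sum_distrib_left mult_ac)
    also have "\<dots> = (\<Sum>i\<in>I. \<Sum>j\<in>S. z (i, j) * ?e (of_int (freq (i, j)) * \<theta>))"
    proof (intro sum.cong refl)
      fix i j
      have "of_int (freq (i, j)) * \<theta> = (of_int n * \<theta> + - \<theta> * real k) + (of_int (m i) * \<theta> + \<theta> * real j)"
        by (simp add: freq_def algebra_simps)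
      then show "?e (of_int n * \<theta>) * ?e (- \<theta> * real k) * (?e (of_int (m i) * \<theta>) * ?e (\<theta> * real j))
          * (x j * d (b i) (unit_vec j) k) = z (i, j) * ?e (of_int (freq (i, j)) * \<theta>)"
        by (simp only: exp_i_add z_def case_prod_conv mult.commute) (simp add: algebra_simps)
    qed
    also have "\<dots> = (\<Sum>p\<in>I \<times> S. z p * ?e (of_int (freq p) * \<theta>))"
      by (simp add: sum.cartesian_product)
    finally show ?thesis .
  qed
  have "((\<lambda>\<theta>. ?e (of_int n * \<theta>) * rho (-\<theta>) (d (rho \<theta> ?a)) x k)
      has_integral (2 * pi) * (\<Sum>p\<in>I \<times> S. if freq p = 0 then z p else 0)) {0..2*pi}"
    unfolding integrand using I S(1) by (intro has_integral_trig_poly) simp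
  then have "fourier_comp d n ?a x k = (\<Sum>p\<in>I \<times> S. if freq p = 0 then z p else 0)"
    unfolding fourier_comp_def by (simp add: integral_unique)
  also have "\<dots> = graded_part (I \<times> S) (\<lambda>(i, j) k. x j * d (b i) (unit_vec j) k) (\<lambda>(i, j). m i + int j) n k"
    unfolding graded_part_def z_def freq_def by (intro sum.cong refl) (auto split: prod.split)
  finally show "fourier_comp d n ?a x k = \<dots>" .
qed

lemma fourier_comp_graded_decomp:
  fixes x1 :: "'g::{topological_ab_group_add,t2_space}"
  assumes G: "compact (UNIV :: 'g set)" and der: "is_derivation x1 d"
    and "a \<in> Acal x1" and "fin_supp x"
  obtains P :: "(nat \<times> nat) set" and z deg
  where "finite P" "\<And>p. p \<in> P \<Longrightarrow> l2 (z p)"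
    "\<And>n. fourier_comp d n a x = graded_part P z deg n" "d a x = (\<lambda>k. \<Sum>p\<in>P. z p k)"
proof -
  obtain n0 :: nat and b m where b: "\<And>i. i < n0 \<Longrightarrow> b i \<in> Acal x1 \<and> homogeneous (m i) (b i)"
    and a: "a = (\<lambda>v k. \<Sum>i<n0. b i v k)"
    using Acal_homogeneous_decomp[OF \<open>a \<in> Acal x1\<close>] by blast
  have bI: "\<And>i. i \<in> {..<n0} \<Longrightarrow> b i \<in> Acal x1 \<and> homogeneous (m i) (b i)"
    using b by simp
  define S where "S = {k. x k \<noteq> 0}"
  have S: "finite S" "\<And>k. k \<notin> S \<Longrightarrow> x k = 0"
    using \<open>fin_supp x\<close> by (auto simp: S_def fin_supp_def)
  define z where "z = (\<lambda>(i, j) k. x j * d (b i) (unit_vec j) k)"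
  show thesis
  proof
    show "finite ({..<n0} \<times> S)" using S(1) by simp
    show "l2 (z p)" if "p \<in> {..<n0} \<times> S" for p
    proof -
      obtain i j where p: "p = (i, j)" by (cases p)
      with that have "i < n0" by simp
      show ?thesis
        unfolding p z_def using l2_smult[OF l2_derivation_unit_vec[OF der conjunct1[OF b[OF \<open>i < n0\<close>]]]] by simp
    qed
    show "fourier_comp d n a x = graded_part ({..<n0} \<times> S) z (\<lambda>(i, j). m i + int j) n" for n
      unfolding a z_def by (rule fourier_comp_homogeneous_sum[OF G der finite_lessThan bI S])
    have "d (\<lambda>v k. \<Sum>i<n0. 1 * b i v k) x = (\<lambda>k. \<Sum>i<n0. 1 * (\<Sum>j\<in>S. x j * d (b i) (unit_vec j) k))"
      by (rule derivation_apply_finite_support[OF G der finite_lessThan]) (use bI S in auto)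
    then show "d a x = (\<lambda>k. \<Sum>p\<in>{..<n0} \<times> S. z p k)"
      by (simp add: a z_def sum.cartesian_product case_prod_beta)
  qed
qed

theorem proposition3p9:
  fixes x1 :: "'g::{topological_ab_group_add,t2_space}"
    and d :: "op \<Rightarrow> op" and a :: op and x :: vec
  assumes "compact (UNIV :: 'g set)"
    and "infinite (UNIV :: 'g set)"
    and "closure {z. \<exists>m::int. z = zmul m x1} = UNIV"
    and "is_derivation x1 d"
    and "a \<in> Acal x1"
    and "fin_supp x"
  shows "(\<forall>n. l2 (fourier_comp d n a x)) \<and>
         (\<lambda>N::nat. l2norm (\<lambda>k. (\<Sum>n\<in>{-int N..int N}. fourier_comp d n a x k) - d a x k))
           \<longlonglongrightarrow> 0"
proof -
  obtain P :: "(nat \<times> nat) set" and z deg where P: "finite P" and z: "\<And>p. p \<in> P \<Longrightarrow> l2 (z p)"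
    and fourier: "\<And>n. fourier_comp d n a x = graded_part P z deg n"
    and da: "d a x = (\<lambda>k. \<Sum>p\<in>P. z p k)"
    using fourier_comp_graded_decomp[OF assms(1,4,5,6)] by blast
  show ?thesis
    unfolding fourier da using l2_graded_part[OF P z] graded_parts_sum_tendsto[OF P z] by simp
qed

end
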